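(* Let $D\subset\mathbb{R}^2\cong\mathbb{C}$ be a connected and simply connected domain with non-empty interior, bounded by a smooth closed curve $\gamma$. Let $F:D\to D$ be a moderate symplectomorphism which is the identity on $\gamma$, let $G=\{(z,F(z)):z\in D\}\subset\mathbb{C}^2$ be its graph, and let $\bar D=\{(z,z):z\in D\}$. Then the map $\mathrm{pr}:G\to\bar D$, $\mathrm{pr}(z_1,z_2)=\big(\tfrac{z_1+z_2}{2},\tfrac{z_1+z_2}{2}\big)$, is a diffeomorphism onto $\bar D$.
   Context: A symplectomorphism of $D$ is an area- and orientation-preserving diffeomorphism $D\to D$. $F=(f,g)$ is moderate if its graph $G$ is everywhere transverse to the fibers of $\mathrm{pr}$ (the tangent plane of $G$ is complementary to $\ker d\,\mathrm{pr}$), equivalently $2+f_x+g_y\neq0$ on $D$. *)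

theory Defs
  imports "HOL-Analysis.Analysis"
begin

fun Ck :: "nat \<Rightarrow> 'a::real_normed_vector set \<Rightarrow> ('a \<Rightarrow> 'b::real_normed_vector) \<Rightarrow> bool" where
  "Ck 0 U f = continuous_on U f"
| "Ck (Suc n) U f =
     ((\<forall>x\<in>U. f differentiable (at x)) \<and>
      (\<forall>v. Ck n U (\<lambda>x. frechet_derivative f (at x) v)))"

definition smooth_open :: "'a::real_normed_vector set \<Rightarrow> ('a \<Rightarrow> 'b::real_normed_vector) \<Rightarrow> bool" where
  "smooth_open U f \<longleftrightarrow> open U \<and> (\<forall>n. Ck n U f)"

text \<open>Smooth map on an arbitrary subset S: locally the restriction of a smooth map
  defined on an open neighbourhood (standard notion for manifolds with boundary /
  embedded submanifolds).\<close>
definition smooth_on_set :: "'a::real_normed_vector set \<Rightarrow> ('a \<Rightarrow> 'b::real_normed_vector) \<Rightarrow> bool" where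
  "smooth_on_set S f \<longleftrightarrow>
     (\<forall>x\<in>S. \<exists>U g. x \<in> U \<and> smooth_open U g \<and> (\<forall>y\<in>S \<inter> U. g y = f y))"

definition diffeomorphism_onto ::
  "'a::real_normed_vector set \<Rightarrow> 'b::real_normed_vector set \<Rightarrow> ('a \<Rightarrow> 'b) \<Rightarrow> bool" where
  "diffeomorphism_onto S T f \<longleftrightarrow>
     smooth_on_set S f \<and> f ` S = T \<and>
     (\<exists>g. smooth_on_set T g \<and> g ` T = S \<and> (\<forall>x\<in>S. g (f x) = x) \<and> (\<forall>y\<in>T. f (g y) = y))"

definition smooth_closed_curve :: "(real \<Rightarrow> complex) \<Rightarrow> bool" where
  "smooth_closed_curve \<gamma> \<longleftrightarrow>
     smooth_open UNIV \<gamma> \<and> (\<forall>t. \<gamma> (t + 1) = \<gamma> t) \<and> inj_on \<gamma> {0..<1} \<and>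
     (\<forall>t. vector_derivative \<gamma> (at t) \<noteq> 0)"

text \<open>Derivative of F at z (relative to D); partial derivatives with F = (f,g):
  f_x = Re (L 1), g_x = Im (L 1), f_y = Re (L i), g_y = Im (L i).\<close>
definition jac_det :: "(complex \<Rightarrow> complex) \<Rightarrow> complex set \<Rightarrow> complex \<Rightarrow> real" where
  "jac_det F D z =
     (let L = frechet_derivative F (at z within D)
      in Re (L 1) * Im (L \<i>) - Im (L 1) * Re (L \<i>))"

text \<open>Symplectomorphism of D: diffeomorphism D \<rightarrow> D preserving the area form
  dx \<and> dy (i.e. Jacobian determinant 1: area and orientation preserving).\<close>
definition symplectomorphism :: "complex set \<Rightarrow> (complex \<Rightarrow> complex) \<Rightarrow> bool" where
  "symplectomorphism D F \<longleftrightarrow> diffeomorphism_onto D D F \<and> (\<forall>z\<in>D. jac_det F D z = 1)"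

definition moderate :: "complex set \<Rightarrow> (complex \<Rightarrow> complex) \<Rightarrow> bool" where
  "moderate D F \<longleftrightarrow>
     (\<forall>z\<in>D. let L = frechet_derivative F (at z within D)
            in 2 + Re (L 1) + Im (L \<i>) \<noteq> 0)"

end

(* The projection (z1, z2) \<mapsto> ((z1 + z2)/2, (z1 + z2)/2) sends the graph point (z, F z) to
   (\<phi> z, \<phi> z) for the midpoint map \<phi> z = (z + F z)/2, so it suffices to show that \<phi> is a
   diffeomorphism of D. As F has Jacobian determinant 1, the derivative of \<phi> has determinant
   (2 + f_x + g_y)/4, which is nonzero by moderateness; by the inverse function theorem \<phi> is
   a local diffeomorphism, also at boundary points, where the derivative of F within D is
   determined by the tangent of \<gamma> and an inward normal segment. A locally injective map of the
   closed Jordan domain D fixing its boundary is a homeomorphism of D: invariance of domain and the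
   Jordan curve theorem give \<phi>(D) = D, and the set of points of the interior with two preimages
   is open, closed in the interior and bounded away from \<gamma>, hence empty. The local smooth
   inverses then glue to a smooth inverse of \<phi>. *)

theory Submission
  imports Defs
begin

section \<open>Calculus of $C^k$ maps\<close>

declare Ck.simps [simp del]

lemma Ck_0 [simp]: "Ck 0 U f \<longleftrightarrow> continuous_on U f"
  by (simp add: Ck.simps)

lemma Ck_Suc_has_derivative:
  "Ck (Suc n) U f \<Longrightarrow> x \<in> U \<Longrightarrow> (f has_derivative frechet_derivative f (at x)) (at x)"
  by (simp add: Ck.simps frechet_derivative_works)

lemma Ck_Suc_frechet_derivative:
  "Ck (Suc n) U f \<Longrightarrow> Ck n U (\<lambda>x. frechet_derivative f (at x) v)"
  by (simp add: Ck.simps)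

lemma Ck_cong:
  assumes "open U" and "Ck n U f" and "\<And>x. x \<in> U \<Longrightarrow> f x = g x"
  shows "Ck n U g"
  using assms(2,3)
proof (induction n arbitrary: f g)
  case 0
  then show ?case using continuous_on_cong by auto
next
  case (Suc n)
  have "(g has_derivative frechet_derivative f (at x)) (at x)" if "x \<in> U" for x
    using has_derivative_transform_within_open[OF Ck_Suc_has_derivative[OF Suc.prems(1) that]
        assms(1) that] Suc.prems(2) by blast
  then have "g differentiable (at x)" "frechet_derivative g (at x) = frechet_derivative f (at x)"
    if "x \<in> U" for x
    using that frechet_derivative_at[symmetric] by (auto simp: differentiable_def)
  then show ?case
    using Suc.IH[OF Ck_Suc_frechet_derivative[OF Suc.prems(1)]] by (simp add: Ck.simps)
qed

lemma Ck_SucI: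
  assumes "open U" and "\<And>x. x \<in> U \<Longrightarrow> (f has_derivative f' x) (at x)"
    and "\<And>v. Ck n U (\<lambda>x. f' x v)"
  shows "Ck (Suc n) U f"
proof -
  have "f' x = frechet_derivative f (at x)" if "x \<in> U" for x
    using assms(2)[OF that] by (rule frechet_derivative_at)
  then show ?thesis
    using assms Ck_cong[OF assms(1) assms(3)] by (auto simp: Ck.simps differentiable_def)
qed

lemma Ck_Suc_imp_Ck: "Ck (Suc n) U f \<Longrightarrow> Ck n U f"
proof (induction n arbitrary: f)
  case 0
  then show ?case
    by (auto simp: Ck.simps intro!: continuous_at_imp_continuous_on differentiable_imp_continuous_within)
next
  case (Suc n)
  have "Ck n U (\<lambda>x. frechet_derivative f (at x) v)" for v
    using Suc.IH[OF Ck_Suc_frechet_derivative[OF Suc.prems]] .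
  then show ?case using Suc.prems by (simp add: Ck.simps(2))
qed

lemma Ck_imp_continuous_on: "Ck n U f \<Longrightarrow> continuous_on U f"
  by (induction n) (auto dest: Ck_Suc_imp_Ck)

lemma Ck_subset: "Ck n U f \<Longrightarrow> U' \<subseteq> U \<Longrightarrow> Ck n U' f"
  by (induction n arbitrary: f) (auto simp: Ck.simps intro: continuous_on_subset)

lemma Ck_const: "Ck n U (\<lambda>x. c)"
proof (induction n arbitrary: c)
  case (Suc n)
  have "frechet_derivative (\<lambda>x. c) (at x) = (\<lambda>v. 0)" for x
    using frechet_derivative_at[OF has_derivative_const] by metis
  then show ?case using Suc by (simp add: Ck.simps(2))
qed simp

lemma Ck_bounded_linear:
  assumes "open U" and "bounded_linear L"
  shows "Ck n U L"
proof (cases n)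
  case 0
  then show ?thesis using assms(2) by (simp add: linear_continuous_on)
next
  case (Suc m)
  show ?thesis unfolding Suc
    by (rule Ck_SucI[OF assms(1) bounded_linear_imp_has_derivative[OF assms(2)] Ck_const])
qed

lemma Ck_add:
  assumes "open U" and "Ck n U f" and "Ck n U g"
  shows "Ck n U (\<lambda>x. f x + g x)"
  using assms(2,3)
proof (induction n arbitrary: f g)
  case (Suc n)
  show ?case
  proof (rule Ck_SucI[OF assms(1)])
    fix x assume "x \<in> U"
    then show "((\<lambda>x. f x + g x) has_derivative
        (\<lambda>v. frechet_derivative f (at x) v + frechet_derivative g (at x) v)) (at x)"
      using Suc.prems by (intro has_derivative_add Ck_Suc_has_derivative)
  next
    fix v
    show "Ck n U (\<lambda>x. frechet_derivative f (at x) v + frechet_derivative g (at x) v)"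
      using Suc.prems by (intro Suc.IH Ck_Suc_frechet_derivative)
  qed
qed (auto intro: continuous_on_add)

lemma Ck_scaleR:
  fixes a :: "'a::real_normed_vector \<Rightarrow> real"
  assumes "open U" and "Ck n U a" and "Ck n U g"
  shows "Ck n U (\<lambda>x. a x *\<^sub>R g x)"
  using assms(2,3)
proof (induction n arbitrary: a g)
  case (Suc n)
  show ?case
  proof (rule Ck_SucI[OF assms(1)])
    fix x assume "x \<in> U"
    then show "((\<lambda>x. a x *\<^sub>R g x) has_derivative
        (\<lambda>v. a x *\<^sub>R frechet_derivative g (at x) v + frechet_derivative a (at x) v *\<^sub>R g x)) (at x)"
      using Suc.prems by (intro has_derivative_scaleR Ck_Suc_has_derivative)
  next
    fix v
    show "Ck n U (\<lambda>x. a x *\<^sub>R frechet_derivative g (at x) v + frechet_derivative a (at x) v *\<^sub>R g x)"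
      using Suc.IH Ck_Suc_imp_Ck[OF Suc.prems(1)] Ck_Suc_imp_Ck[OF Suc.prems(2)]
        Ck_Suc_frechet_derivative[OF Suc.prems(1)] Ck_Suc_frechet_derivative[OF Suc.prems(2)]
      by (intro Ck_add[OF assms(1)]) blast+
  qed
qed (auto intro: continuous_intros)

lemma Ck_bounded_linear_compose:
  assumes "open U" and "bounded_linear L" and "Ck n U f"
  shows "Ck n U (\<lambda>x. L (f x))"
  using assms(3)
proof (induction n arbitrary: f)
  case 0
  then show ?case using bounded_linear.continuous_on[OF assms(2)] by simp
next
  case (Suc n)
  show ?case
  proof (rule Ck_SucI[OF assms(1)])
    fix x assume "x \<in> U"
    then show "((\<lambda>x. L (f x)) has_derivative (\<lambda>v. L (frechet_derivative f (at x) v))) (at x)"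
      using Suc.prems by (intro bounded_linear.has_derivative[OF assms(2)] Ck_Suc_has_derivative)
  next
    fix v
    show "Ck n U (\<lambda>x. L (frechet_derivative f (at x) v))"
      using Suc.prems by (intro Suc.IH Ck_Suc_frechet_derivative)
  qed
qed

lemma Ck_inverse:
  fixes a :: "'a::real_normed_vector \<Rightarrow> real"
  assumes "open U" and "Ck n U a" and "\<And>x. x \<in> U \<Longrightarrow> a x \<noteq> 0"
  shows "Ck n U (\<lambda>x. inverse (a x))"
  using assms(2)
proof (induction n)
  case 0
  then show ?case using assms(3) by (simp add: continuous_on_inverse)
next
  case (Suc n)
  have inv: "Ck n U (\<lambda>x. inverse (a x))"
    using Suc.IH[OF Ck_Suc_imp_Ck[OF Suc.prems]] .
  show ?case
  proof (rule Ck_SucI[OF assms(1)])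
    fix x assume "x \<in> U"
    then show "((\<lambda>x. inverse (a x)) has_derivative
        (\<lambda>v. - (inverse (a x) * frechet_derivative a (at x) v * inverse (a x)))) (at x)"
      using Deriv.has_derivative_inverse[OF assms(3) Ck_Suc_has_derivative[OF Suc.prems]] \<open>x \<in> U\<close> by blast
  next
    fix v
    have "Ck n U (\<lambda>x. - (inverse (a x) *\<^sub>R (frechet_derivative a (at x) v *\<^sub>R inverse (a x))))"
      by (intro Ck_bounded_linear_compose[OF assms(1) bounded_linear_minus[OF bounded_linear_ident]]
          Ck_scaleR[OF assms(1)] inv Ck_Suc_frechet_derivative[OF Suc.prems])
    then show "Ck n U (\<lambda>x. - (inverse (a x) * frechet_derivative a (at x) v * inverse (a x)))"
      by (simp add: mult.assoc)
  qed
qed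

lemma Ck_Pair:
  assumes "open U" and "Ck n U f" and "Ck n U g"
  shows "Ck n U (\<lambda>x. (f x, g x))"
  using assms(2,3)
proof (induction n arbitrary: f g)
  case (Suc n)
  show ?case
  proof (rule Ck_SucI[OF assms(1)])
    fix x assume "x \<in> U"
    then show "((\<lambda>x. (f x, g x)) has_derivative
        (\<lambda>v. (frechet_derivative f (at x) v, frechet_derivative g (at x) v))) (at x)"
      using Suc.prems by (intro has_derivative_Pair Ck_Suc_has_derivative)
  next
    fix v
    show "Ck n U (\<lambda>x. (frechet_derivative f (at x) v, frechet_derivative g (at x) v))"
      using Suc.prems by (intro Suc.IH Ck_Suc_frechet_derivative)
  qed
qed (auto intro: continuous_on_Pair)

lemma Ck_fst_compose:
  fixes f :: "'a::real_normed_vector \<Rightarrow> 'b::real_normed_vector"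
  assumes "open U" and "Ck n U f"
  shows "Ck n (U \<times> (UNIV::'c::real_normed_vector set)) (\<lambda>p. f (fst p))"
  using assms(2)
proof (induction n arbitrary: f)
  case 0
  then show ?case by (auto intro!: continuous_on_compose2[OF _ continuous_on_fst])
next
  case (Suc n)
  show ?case
  proof (rule Ck_SucI)
    show "open (U \<times> (UNIV::'c set))" using assms(1) by (simp add: open_Times)
    fix p :: "'a \<times> 'c"
    assume "p \<in> U \<times> UNIV"
    then show "((\<lambda>p. f (fst p)) has_derivative (\<lambda>v. frechet_derivative f (at (fst p)) (fst v))) (at p)"
      using Ck_Suc_has_derivative[OF Suc.prems]
      by (auto intro!: has_derivative_compose[OF has_derivative_fst[OF has_derivative_ident]])
  next
    fix v :: "'a \<times> 'c"
    show "Ck n (U \<times> (UNIV::'c set)) (\<lambda>p. frechet_derivative f (at (fst p)) (fst v))"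
      by (rule Suc.IH) (rule Ck_Suc_frechet_derivative[OF Suc.prems])
  qed
qed

lemma smooth_open_imp_open: "smooth_open U f \<Longrightarrow> open U"
  by (simp add: smooth_open_def)

lemma smooth_open_has_derivative:
  "smooth_open U f \<Longrightarrow> x \<in> U \<Longrightarrow> (f has_derivative frechet_derivative f (at x)) (at x)"
  unfolding smooth_open_def using Ck_Suc_has_derivative by blast

lemma smooth_open_continuous_on: "smooth_open U f \<Longrightarrow> continuous_on U f"
  unfolding smooth_open_def using Ck_imp_continuous_on by blast

lemma smooth_open_frechet_derivative:
  "smooth_open U f \<Longrightarrow> smooth_open U (\<lambda>x. frechet_derivative f (at x) v)"
  unfolding smooth_open_def using Ck_Suc_frechet_derivative by blast

lemma smooth_open_cong:
  "smooth_open U f \<Longrightarrow> (\<And>x. x \<in> U \<Longrightarrow> f x = g x) \<Longrightarrow> smooth_open U g"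
  by (auto simp: smooth_open_def intro: Ck_cong)

lemma smooth_open_subset:
  "smooth_open U f \<Longrightarrow> open U' \<Longrightarrow> U' \<subseteq> U \<Longrightarrow> smooth_open U' f"
  by (auto simp: smooth_open_def intro: Ck_subset)

lemma smooth_open_const: "open U \<Longrightarrow> smooth_open U (\<lambda>x. c)"
  by (auto simp: smooth_open_def intro: Ck_const)

lemma smooth_open_bounded_linear: "open U \<Longrightarrow> bounded_linear L \<Longrightarrow> smooth_open U L"
  by (auto simp: smooth_open_def intro: Ck_bounded_linear)

lemma smooth_open_ident: "open U \<Longrightarrow> smooth_open U (\<lambda>x. x)"
  by (rule smooth_open_bounded_linear[OF _ bounded_linear_ident])

lemma smooth_open_add:
  "smooth_open U f \<Longrightarrow> smooth_open U g \<Longrightarrow> smooth_open U (\<lambda>x. f x + g x)"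
  by (auto simp: smooth_open_def intro: Ck_add)

lemma smooth_open_scaleR:
  "smooth_open U a \<Longrightarrow> smooth_open U g \<Longrightarrow> smooth_open U (\<lambda>x. a x *\<^sub>R g x)"
  by (auto simp: smooth_open_def intro: Ck_scaleR)

lemma smooth_open_mult:
  "smooth_open U a \<Longrightarrow> smooth_open U b \<Longrightarrow> smooth_open U (\<lambda>x. a x * b x :: real)"
  using smooth_open_scaleR[of U a b] by simp

lemma smooth_open_bounded_linear_compose:
  "bounded_linear L \<Longrightarrow> smooth_open U f \<Longrightarrow> smooth_open U (\<lambda>x. L (f x))"
  by (auto simp: smooth_open_def intro: Ck_bounded_linear_compose)

lemma smooth_open_diff:
  "smooth_open U f \<Longrightarrow> smooth_open U g \<Longrightarrow> smooth_open U (\<lambda>x. f x - g x)"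
  using smooth_open_add[of U f "\<lambda>x. - g x"]
    smooth_open_bounded_linear_compose[OF bounded_linear_minus[OF bounded_linear_ident], of U g]
  by simp

lemma smooth_open_Re: "smooth_open U f \<Longrightarrow> smooth_open U (\<lambda>x. Re (f x))"
  using smooth_open_bounded_linear_compose[OF bounded_linear_Re] .

lemma smooth_open_Im: "smooth_open U f \<Longrightarrow> smooth_open U (\<lambda>x. Im (f x))"
  using smooth_open_bounded_linear_compose[OF bounded_linear_Im] .

lemma smooth_open_inverse:
  "smooth_open U a \<Longrightarrow> (\<And>x. x \<in> U \<Longrightarrow> a x \<noteq> 0) \<Longrightarrow> smooth_open U (\<lambda>x. inverse (a x :: real))"
  by (auto simp: smooth_open_def intro: Ck_inverse)

lemma smooth_open_Pair:
  "smooth_open U f \<Longrightarrow> smooth_open U g \<Longrightarrow> smooth_open U (\<lambda>x. (f x, g x))"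
  by (auto simp: smooth_open_def intro: Ck_Pair)

lemma smooth_open_fst_compose:
  "smooth_open U f \<Longrightarrow> smooth_open (U \<times> (UNIV::'c::real_normed_vector set)) (\<lambda>p. f (fst p))"
  by (auto simp: smooth_open_def open_Times intro: Ck_fst_compose)

section \<open>Real-linear maps of the plane\<close>

definition det2 :: "complex \<Rightarrow> complex \<Rightarrow> real" where
  "det2 u v = Re u * Im v - Im u * Re v"

(* Cramer's rule: the inverse of the real-linear map of \<complex> sending 1 and \<i> to p and q. *)
definition cramer_inv :: "complex \<Rightarrow> complex \<Rightarrow> complex \<Rightarrow> complex" where
  "cramer_inv p q y = Complex (det2 y q / det2 p q) (det2 p y / det2 p q)"

lemma real_linear_complex_expand:
  assumes "linear (L :: complex \<Rightarrow> 'b::real_vector)"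
  shows "L z = Re z *\<^sub>R L 1 + Im z *\<^sub>R L \<i>"
proof -
  have "Re z *\<^sub>R 1 + Im z *\<^sub>R \<i> = z"
    by (simp add: complex_eq_iff)
  then have "L z = L (Re z *\<^sub>R 1 + Im z *\<^sub>R \<i>)"
    by simp
  also have "\<dots> = Re z *\<^sub>R L 1 + Im z *\<^sub>R L \<i>"
    using assms by (simp add: linear_add linear_scale)
  finally show ?thesis .
qed

lemma det2_linear_image:
  assumes "linear T"
  shows "det2 (T a) (T b) = det2 (T 1) (T \<i>) * det2 a b"
  by (subst (1 2) real_linear_complex_expand[OF assms]) (simp add: det2_def algebra_simps)

lemma surj_linear_det2_nonzero:
  assumes "linear T" and "surj T"
  shows "det2 (T 1) (T \<i>) \<noteq> 0"
proof -
  obtain a b where "T a = 1" "T b = \<i>"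
    using assms(2) by (metis surjD)
  then have "det2 (T 1) (T \<i>) * det2 a b = 1"
    using det2_linear_image[OF assms(1), of a b] by (simp add: det2_def)
  then show ?thesis by auto
qed

lemma cramer_inv_linear_image:
  assumes "linear T" and "det2 (T 1) (T \<i>) \<noteq> 0"
  shows "cramer_inv (T 1) (T \<i>) (T h) = h"
  using assms(2) det2_linear_image[OF assms(1), of h \<i>] det2_linear_image[OF assms(1), of 1 h]
  by (simp add: cramer_inv_def det2_def complex_eq_iff)

lemma bounded_linear_cramer_inv: "bounded_linear (cramer_inv p q)"
proof -
  have "linear (cramer_inv p q)"
    by (rule linearI)
      (simp_all add: cramer_inv_def det2_def complex_eq_iff algebra_simps diff_divide_distrib
        add_divide_distrib)
  then show ?thesis by (simp add: linear_conv_bounded_linear)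
qed

lemma inv_linear_eq_cramer_inv:
  assumes "linear T" and "bij T"
  shows "inv T = cramer_inv (T 1) (T \<i>)"
proof
  fix y
  have "T (inv T y) = y"
    using assms(2) by (simp add: bij_is_surj surj_f_inv_f)
  then show "inv T y = cramer_inv (T 1) (T \<i>) y"
    using cramer_inv_linear_image[OF assms(1) surj_linear_det2_nonzero[OF assms(1) bij_is_surj[OF assms(2)]]]
    by metis
qed

lemma real_linear_eqI_complex:
  fixes L1 L2 :: "complex \<Rightarrow> complex"
  assumes "linear L1" and "linear L2" and "c \<noteq> 0" and "L1 c = L2 c" and "L1 (\<i> * c) = L2 (\<i> * c)"
  shows "L1 = L2"
proof
  fix h
  have h: "h = Re (h / c) *\<^sub>R c + Im (h / c) *\<^sub>R (\<i> * c)"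
  proof -
    have "h = (h / c) * c" using assms(3) by simp
    also have "\<dots> = Re (h / c) *\<^sub>R c + Im (h / c) *\<^sub>R (\<i> * c)"
      by (subst complex_eq[of "h / c"]) (simp add: scaleR_conv_of_real algebra_simps)
    finally show ?thesis .
  qed
  show "L1 h = L2 h"
    by (subst (1 2) h) (simp add: linear_add[OF assms(1)] linear_add[OF assms(2)]
        linear_scale[OF assms(1)] linear_scale[OF assms(2)] assms(4,5))
qed

lemma smooth_open_det2:
  "smooth_open U a \<Longrightarrow> smooth_open U b \<Longrightarrow> smooth_open U (\<lambda>x. det2 (a x) (b x))"
  unfolding det2_def by (intro smooth_open_diff smooth_open_mult smooth_open_Re smooth_open_Im)

lemma smooth_open_cramer_inv:
  assumes "smooth_open U p" and "smooth_open U q" and "\<And>x. x \<in> U \<Longrightarrow> det2 (p x) (q x) \<noteq> 0"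
  shows "smooth_open U (\<lambda>x. cramer_inv (p x) (q x) v)"
proof (rule smooth_open_cong)
  have U: "open U" using assms(1) by (rule smooth_open_imp_open)
  have inv: "smooth_open U (\<lambda>x. inverse (det2 (p x) (q x)))"
    by (intro smooth_open_inverse smooth_open_det2 assms)
  show "smooth_open U (\<lambda>x. (det2 v (q x) * inverse (det2 (p x) (q x))) *\<^sub>R 1
      + (det2 (p x) v * inverse (det2 (p x) (q x))) *\<^sub>R \<i>)"
    by (intro smooth_open_add smooth_open_scaleR smooth_open_mult smooth_open_det2 inv assms
        smooth_open_const U)
qed (simp add: cramer_inv_def complex_eq_iff divide_inverse)

lemma smooth_open_frechet_derivative_apply:
  fixes h :: "complex \<Rightarrow> 'b::real_normed_vector"
  assumes "smooth_open U h" and "smooth_open U w"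
  shows "smooth_open U (\<lambda>x. frechet_derivative h (at x) (w x))"
proof (rule smooth_open_cong)
  show "smooth_open U (\<lambda>x. Re (w x) *\<^sub>R frechet_derivative h (at x) 1
      + Im (w x) *\<^sub>R frechet_derivative h (at x) \<i>)"
    by (intro smooth_open_add smooth_open_scaleR smooth_open_Re smooth_open_Im
        smooth_open_frechet_derivative assms)
  fix x assume "x \<in> U"
  show "Re (w x) *\<^sub>R frechet_derivative h (at x) 1 + Im (w x) *\<^sub>R frechet_derivative h (at x) \<i>
      = frechet_derivative h (at x) (w x)"
    by (rule real_linear_complex_expand[symmetric])
      (rule has_derivative_linear[OF smooth_open_has_derivative[OF assms(1) \<open>x \<in> U\<close>]])
qed

section \<open>Inverse function theorem with smooth inverse\<close>

lemma Ck_Suc_blinfun_derivative: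
  fixes f :: "'a::euclidean_space \<Rightarrow> 'b::real_normed_vector"
  assumes "Ck (Suc n) U f"
  shows "\<And>x. x \<in> U \<Longrightarrow> (f has_derivative blinfun_apply (Blinfun (frechet_derivative f (at x)))) (at x)"
    and "continuous_on U (\<lambda>x. Blinfun (frechet_derivative f (at x)))"
proof -
  have apply_eq: "blinfun_apply (Blinfun (frechet_derivative f (at x))) = frechet_derivative f (at x)"
    if "x \<in> U" for x
    using bounded_linear_Blinfun_apply[OF has_derivative_bounded_linear[OF Ck_Suc_has_derivative[OF assms that]]] .
  show "(f has_derivative blinfun_apply (Blinfun (frechet_derivative f (at x)))) (at x)" if "x \<in> U" for x
    using Ck_Suc_has_derivative[OF assms that] apply_eq[OF that] by simp
  show "continuous_on U (\<lambda>x. Blinfun (frechet_derivative f (at x)))"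
  proof (rule continuous_on_blinfun_componentwise)
    fix i :: 'a
    have "continuous_on U (\<lambda>x. frechet_derivative f (at x) i)"
      by (rule Ck_imp_continuous_on[OF Ck_Suc_frechet_derivative[OF assms]])
    then show "continuous_on U (\<lambda>x. blinfun_apply (Blinfun (frechet_derivative f (at x))) i)"
      using apply_eq by (simp cong: continuous_on_cong)
  qed
qed

lemma inverse_function_theorem_complex:
  fixes \<Phi> :: "complex \<Rightarrow> complex"
  assumes "open W" and C1: "Ck (Suc n) W \<Phi>" and "x0 \<in> W"
    and nz: "det2 (frechet_derivative \<Phi> (at x0) 1) (frechet_derivative \<Phi> (at x0) \<i>) \<noteq> 0"
  obtains U V \<Psi> where "open U" "U \<subseteq> W" "x0 \<in> U" "open V" "homeomorphism U V \<Phi> \<Psi>"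
    "\<And>y. y \<in> V \<Longrightarrow> (\<Psi> has_derivative
       cramer_inv (frechet_derivative \<Phi> (at (\<Psi> y)) 1) (frechet_derivative \<Phi> (at (\<Psi> y)) \<i>)) (at y)"
    "\<And>x. x \<in> U \<Longrightarrow> det2 (frechet_derivative \<Phi> (at x) 1) (frechet_derivative \<Phi> (at x) \<i>) \<noteq> 0"
proof -
  let ?d = "\<lambda>x. frechet_derivative \<Phi> (at x)"
  have lin: "linear (?d x)" if "x \<in> W" for x
    using has_derivative_linear[OF Ck_Suc_has_derivative[OF C1 that]] .
  have apply_eq: "blinfun_apply (Blinfun (?d x)) = ?d x" if "x \<in> W" for x
    using bounded_linear_Blinfun_apply[OF has_derivative_bounded_linear[OF Ck_Suc_has_derivative[OF C1 that]]] .
  have left_inv: "Blinfun (cramer_inv (?d x0 1) (?d x0 \<i>)) o\<^sub>L Blinfun (?d x0) = id_blinfun"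
    by (rule blinfun_eqI)
      (simp add: bounded_linear_Blinfun_apply[OF bounded_linear_cramer_inv] apply_eq[OF \<open>x0 \<in> W\<close>]
        cramer_inv_linear_image[OF lin[OF \<open>x0 \<in> W\<close>] nz])
  obtain U V \<Psi> \<Psi>' where UV: "open U" "U \<subseteq> W" "x0 \<in> U" "open V"
    and "\<Phi> x0 \<in> V" and hom: "homeomorphism U V \<Phi> \<Psi>"
    and der: "\<And>y. y \<in> V \<Longrightarrow> (\<Psi> has_derivative \<Psi>' y) (at y)"
    and der_eq: "\<And>y. y \<in> V \<Longrightarrow> \<Psi>' y = inv (blinfun_apply (Blinfun (?d (\<Psi> y))))"
    and bij: "\<And>y. y \<in> V \<Longrightarrow> bij (blinfun_apply (Blinfun (?d (\<Psi> y))))"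
    using inverse_function_theorem[OF \<open>open W\<close> Ck_Suc_blinfun_derivative[OF C1] \<open>x0 \<in> W\<close> left_inv]
    by blast
  have \<Psi>W: "\<Psi> y \<in> W" if "y \<in> V" for y
    using UV(2) hom that homeomorphism_image2 by blast
  show ?thesis
  proof (rule that[OF UV hom])
    fix y assume "y \<in> V"
    then show "(\<Psi> has_derivative cramer_inv (?d (\<Psi> y) 1) (?d (\<Psi> y) \<i>)) (at y)"
      using der[of y] der_eq[of y] bij[of y] apply_eq[OF \<Psi>W] inv_linear_eq_cramer_inv[OF lin[OF \<Psi>W]]
      by simp
  next
    fix x assume "x \<in> U"
    then have "\<Phi> x \<in> V" "\<Psi> (\<Phi> x) = x" "x \<in> W"
      using UV(2) hom by (auto simp: homeomorphism_def)
    then show "det2 (?d x 1) (?d x \<i>) \<noteq> 0"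
      using bij[of "\<Phi> x"] apply_eq[of x] surj_linear_det2_nonzero[OF lin[of x]] bij_is_surj by auto
  qed
qed

(* Induction over all smooth h simultaneously: the derivative of h \<circ> \<Psi> is again of the form
   h' \<circ> \<Psi> for a smooth h' on W, by the formula for the derivative of \<Psi>. *)
lemma Ck_compose_local_inverse:
  fixes \<Phi> \<Psi> :: "complex \<Rightarrow> complex" and h :: "complex \<Rightarrow> 'b::real_normed_vector"
  assumes \<Phi>: "smooth_open W \<Phi>"
    and nz: "\<And>x. x \<in> W \<Longrightarrow> det2 (frechet_derivative \<Phi> (at x) 1) (frechet_derivative \<Phi> (at x) \<i>) \<noteq> 0"
    and "open V" and "\<Psi> ` V \<subseteq> W" and "continuous_on V \<Psi>"
    and \<Psi>: "\<And>y. y \<in> V \<Longrightarrow> (\<Psi> has_derivative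
       cramer_inv (frechet_derivative \<Phi> (at (\<Psi> y)) 1) (frechet_derivative \<Phi> (at (\<Psi> y)) \<i>)) (at y)"
    and "smooth_open W h"
  shows "Ck n V (\<lambda>y. h (\<Psi> y))"
  using \<open>smooth_open W h\<close>
proof (induction n arbitrary: h)
  case 0
  then show ?case
    using continuous_on_compose2[OF smooth_open_continuous_on \<open>continuous_on V \<Psi>\<close> \<open>\<Psi> ` V \<subseteq> W\<close>]
    by simp
next
  case (Suc n)
  let ?inv = "\<lambda>x v. cramer_inv (frechet_derivative \<Phi> (at x) 1) (frechet_derivative \<Phi> (at x) \<i>) v"
  show ?case
  proof (rule Ck_SucI[OF \<open>open V\<close>])
    fix y assume "y \<in> V"
    then show "((\<lambda>y. h (\<Psi> y)) has_derivative
        (\<lambda>v. frechet_derivative h (at (\<Psi> y)) (?inv (\<Psi> y) v))) (at y)"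
      using has_derivative_compose[OF \<Psi> smooth_open_has_derivative[OF Suc.prems]] \<open>\<Psi> ` V \<subseteq> W\<close>
      by blast
  next
    fix v
    have "smooth_open W (\<lambda>x. frechet_derivative h (at x) (?inv x v))"
      by (intro smooth_open_frechet_derivative_apply smooth_open_cramer_inv
          smooth_open_frechet_derivative Suc.prems \<Phi> nz)
    then show "Ck n V (\<lambda>y. frechet_derivative h (at (\<Psi> y)) (?inv (\<Psi> y) v))"
      by (rule Suc.IH)
  qed
qed

lemma smooth_local_inverse:
  fixes \<Phi> :: "complex \<Rightarrow> complex"
  assumes "smooth_open W \<Phi>" and "x0 \<in> W"
    and "det2 (frechet_derivative \<Phi> (at x0) 1) (frechet_derivative \<Phi> (at x0) \<i>) \<noteq> 0"
  obtains U V \<Psi> where "open U" "U \<subseteq> W" "x0 \<in> U" "open V" "homeomorphism U V \<Phi> \<Psi>"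
    "\<And>h :: complex \<Rightarrow> 'b::real_normed_vector. smooth_open W h \<Longrightarrow> smooth_open V (\<lambda>y. h (\<Psi> y))"
proof -
  have W: "open W" using assms(1) by (rule smooth_open_imp_open)
  obtain U V \<Psi> where UV: "open U" "U \<subseteq> W" "x0 \<in> U" "open V" "homeomorphism U V \<Phi> \<Psi>"
    and der: "\<And>y. y \<in> V \<Longrightarrow> (\<Psi> has_derivative
       cramer_inv (frechet_derivative \<Phi> (at (\<Psi> y)) 1) (frechet_derivative \<Phi> (at (\<Psi> y)) \<i>)) (at y)"
    and nz: "\<And>x. x \<in> U \<Longrightarrow> det2 (frechet_derivative \<Phi> (at x) 1) (frechet_derivative \<Phi> (at x) \<i>) \<noteq> 0"
    using inverse_function_theorem_complex[OF W _ assms(2,3)] assms(1) by (metis smooth_open_def)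
  have "smooth_open V (\<lambda>y. h (\<Psi> y))" if "smooth_open W h" for h :: "complex \<Rightarrow> 'b"
    unfolding smooth_open_def
    using Ck_compose_local_inverse[OF smooth_open_subset[OF assms(1) UV(1,2)] nz UV(4)
        homeomorphism_image2[OF UV(5), THEN equalityD1] homeomorphism_cont2[OF UV(5)] der
        smooth_open_subset[OF that UV(1,2)]] UV(4)
    by blast
  then show ?thesis using that[OF UV] by blast
qed

section \<open>Jordan domains bounded by smooth closed curves\<close>

lemma connected_subset_inside:
  assumes "connected T" and "T \<inter> S = {}" and "x \<in> T" and "x \<in> inside S"
  shows "T \<subseteq> inside S"
  using assms inside_same_component[of S x] unfolding connected_component_def by blast

lemma connected_subset_if_frontier_disjoint:
  "connected T \<Longrightarrow> T \<inter> frontier A = {} \<Longrightarrow> T \<inter> A \<noteq> {} \<Longrightarrow> T \<subseteq> A"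
  using connected_Int_frontier by blast

lemma interior_eq_inside_Jordan:
  fixes c :: "real \<Rightarrow> complex"
  assumes "simple_path c" and "pathfinish c = pathstart c"
    and "bounded D" and "frontier D = path_image c" and "interior D \<noteq> {}"
  shows "interior D = inside (path_image c)"
proof -
  let ?\<Gamma> = "path_image c"
  have conn: "connected (inside ?\<Gamma>)" "connected (outside ?\<Gamma>)"
    and unbounded: "\<not> bounded (outside ?\<Gamma>)"
    using Jordan_inside_outside[OF assms(1,2)] by auto
  have fr: "inside ?\<Gamma> \<inter> frontier (interior D) = {}" "outside ?\<Gamma> \<inter> frontier (interior D) = {}"
    using frontier_interior_subset[of D] assms(4) inside_no_overlap[of ?\<Gamma>] outside_no_overlap[of ?\<Gamma>]
    by blast+
  have "interior D \<inter> outside ?\<Gamma> = {}"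
  proof (rule ccontr)
    assume "interior D \<inter> outside ?\<Gamma> \<noteq> {}"
    then have "outside ?\<Gamma> \<subseteq> interior D"
      using connected_subset_if_frontier_disjoint[OF conn(2) fr(2)] by (simp add: Int_commute)
    then show False using unbounded \<open>bounded D\<close> bounded_subset interior_subset by blast
  qed
  moreover have "interior D \<inter> ?\<Gamma> = {}"
    using assms(4) by (auto simp: frontier_def)
  ultimately have sub: "interior D \<subseteq> inside ?\<Gamma>"
    using inside_Un_outside[of ?\<Gamma>] by blast
  then have "inside ?\<Gamma> \<inter> interior D \<noteq> {}"
    using assms(5) by blast
  then have "inside ?\<Gamma> \<subseteq> interior D"
    using connected_subset_if_frontier_disjoint[OF conn(1) fr(1)] by (simp add: Int_commute)
  then show ?thesis using sub by blast
qed

lemma closed_eq_inside_Un_Jordan: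
  fixes c :: "real \<Rightarrow> complex"
  assumes "simple_path c" and "pathfinish c = pathstart c" and "closed D"
    and "bounded D" and "frontier D = path_image c" and "interior D \<noteq> {}"
  shows "D = inside (path_image c) \<union> path_image c"
proof -
  have "D = interior D \<union> frontier D"
    using closure_Un_frontier[of D] interior_subset[of D] \<open>closed D\<close> unfolding frontier_def by auto
  then show ?thesis using interior_eq_inside_Jordan[OF assms(1,2,4-6)] assms(5) by simp
qed

context
  fixes \<gamma> :: "real \<Rightarrow> complex"
  assumes curve: "smooth_closed_curve \<gamma>"
begin

lemma smooth_closed_curve_periodic: "\<gamma> (t + of_int k) = \<gamma> t"
proof (induction k arbitrary: t rule: int_induct[where k = 0])
  case base
  then show ?case by simp
next
  case (step1 i)
  then show ?case using curve[unfolded smooth_closed_curve_def] by (metis add.assoc of_int_add of_int_1)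
next
  case (step2 i)
  then show ?case using curve[unfolded smooth_closed_curve_def]
    by (metis diff_add_cancel of_int_1 of_int_diff add_diff_eq)
qed

lemma smooth_closed_curve_frac: "\<gamma> (frac t) = \<gamma> t"
  using smooth_closed_curve_periodic[of t "- \<lfloor>t\<rfloor>"] by (simp add: frac_def)

lemma smooth_closed_curve_in_path_image: "\<gamma> t \<in> path_image \<gamma>"
  using smooth_closed_curve_frac[of t] frac_lt_1[of t] frac_ge_0[of t]
  unfolding path_image_def by (metis atLeastAtMost_iff image_eqI less_imp_le)

lemma smooth_closed_curve_eq_imp_frac_eq: "\<gamma> s = \<gamma> t \<Longrightarrow> frac s = frac t"
  using curve frac_lt_1 smooth_closed_curve_frac[of s] smooth_closed_curve_frac[of t]
  unfolding smooth_closed_curve_def inj_on_def by (metis atLeastLessThan_iff frac_ge_0)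

lemma smooth_closed_curve_continuous: "continuous_on UNIV \<gamma>"
  using curve smooth_open_continuous_on unfolding smooth_closed_curve_def by blast

lemma pathfinish_smooth_closed_curve: "pathfinish \<gamma> = pathstart \<gamma>"
  using curve unfolding smooth_closed_curve_def pathfinish_def pathstart_def by (metis add_0)

lemma simple_path_smooth_closed_curve: "simple_path \<gamma>"
  unfolding simple_path_def loop_free_def path_def
proof (intro conjI ballI impI)
  show "continuous_on {0..1} \<gamma>"
    using smooth_closed_curve_continuous continuous_on_subset by blast
  fix x y :: real
  assume "x \<in> {0..1}" "y \<in> {0..1}" "\<gamma> x = \<gamma> y"
  moreover have "frac u = (if u = 1 then 0 else u)" if "u \<in> {0..1}" for u :: real
    using that frac_of_int[of 1] by (auto simp: frac_eq)
  ultimately show "x = y \<or> x = 0 \<and> y = 1 \<or> x = 1 \<and> y = 0"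
    using smooth_closed_curve_eq_imp_frac_eq by (smt (verit))
qed

lemma smooth_closed_curve_has_vector_derivative:
  "(\<gamma> has_vector_derivative vector_derivative \<gamma> (at t)) (at t)"
  using curve Ck_Suc_has_derivative[of 0 UNIV \<gamma> t] vector_derivative_works
  unfolding smooth_closed_curve_def smooth_open_def differentiable_def by blast

lemma smooth_closed_curve_shift_has_vector_derivative:
  "((\<lambda>s. \<gamma> (t0 + s)) has_vector_derivative vector_derivative \<gamma> (at t0)) (at 0 within S)"
proof -
  have "((\<lambda>s. t0 + s) has_vector_derivative 1) (at 0)"
    by (auto intro!: derivative_eq_intros simp: has_vector_derivative_def)
  moreover have "(\<gamma> has_vector_derivative vector_derivative \<gamma> (at t0)) (at ((\<lambda>s. t0 + s) 0))"
    using smooth_closed_curve_has_vector_derivative by simp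
  ultimately show ?thesis
    using vector_diff_chain_at has_vector_derivative_at_within by (fastforce simp: o_def)
qed

lemma smooth_closed_curve_continuous_derivative:
  "continuous_on UNIV (\<lambda>t. vector_derivative \<gamma> (at t))"
proof -
  have "frechet_derivative \<gamma> (at t) 1 = vector_derivative \<gamma> (at t)" for t
    using smooth_closed_curve_has_vector_derivative[of t] frechet_derivative_at
    unfolding has_vector_derivative_def by (metis scaleR_one)
  then show ?thesis
    using curve Ck_Suc_frechet_derivative[of 0 UNIV \<gamma> 1]
    unfolding smooth_closed_curve_def smooth_open_def by simp
qed

lemma smooth_closed_curve_near_point:
  assumes "a > 0"
  obtains e where "e > 0"
    "\<And>z. z \<in> path_image \<gamma> \<Longrightarrow> dist z (\<gamma> t0) < e \<Longrightarrow> \<exists>s. \<bar>s - t0\<bar> \<le> a \<and> z = \<gamma> s"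
proof -
  define K where "K = \<gamma> ` {t0 + a .. t0 + 1 - a}"
  have "compact K"
    unfolding K_def
    using compact_continuous_image[OF continuous_on_subset[OF smooth_closed_curve_continuous] compact_Icc]
    by blast
  have "\<gamma> t0 \<notin> K"
  proof
    assume "\<gamma> t0 \<in> K"
    then obtain s where s: "t0 + a \<le> s" "s \<le> t0 + 1 - a" "\<gamma> s = \<gamma> t0"
      unfolding K_def by auto
    then have "s - t0 = of_int (\<lfloor>s\<rfloor> - \<lfloor>t0\<rfloor>)"
      using smooth_closed_curve_eq_imp_frac_eq[OF s(3)] unfolding frac_def by simp
    moreover have "0 < s - t0" "s - t0 < 1" using s(1,2) \<open>a > 0\<close> by auto
    ultimately have "0 < \<lfloor>s\<rfloor> - \<lfloor>t0\<rfloor> \<and> \<lfloor>s\<rfloor> - \<lfloor>t0\<rfloor> < 1"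
      by (metis of_int_0_less_iff of_int_less_1_iff)
    then show False by linarith
  qed
  moreover have "open (- K)"
    using compact_imp_closed[OF \<open>compact K\<close>] by (simp add: open_Compl)
  ultimately obtain e where e: "e > 0" "ball (\<gamma> t0) e \<subseteq> - K"
    using open_contains_ball by blast
  show ?thesis
  proof (rule that[OF e(1)])
    fix z assume "z \<in> path_image \<gamma>" and z: "dist z (\<gamma> t0) < e"
    then obtain s where s: "z = \<gamma> s" unfolding path_image_def by auto
    define s' where "s' = s - of_int \<lfloor>s - (t0 - a)\<rfloor>"
    have "\<gamma> s' = z"
      using smooth_closed_curve_periodic[of s "- \<lfloor>s - (t0 - a)\<rfloor>"] unfolding s'_def s by simp
    moreover have "t0 - a \<le> s'" "s' < t0 - a + 1"
      unfolding s'_def by linarith+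
    ultimately have s': "t0 - a \<le> s'" "s' < t0 - a + 1" "\<gamma> s' = z" by auto
    have "z \<notin> K" using e(2) z by (auto simp: dist_commute subset_iff)
    then have "s' < t0 + a"
      using s' unfolding K_def by force
    then show "\<exists>s. \<bar>s - t0\<bar> \<le> a \<and> z = \<gamma> s"
      using s' by (intro exI[of _ s']) auto
  qed
qed

end

section \<open>Derivatives within the closed inside of a smooth closed curve\<close>

lemma has_derivative_within_eq_along_path:
  assumes L1: "(f has_derivative L1) (at x within S)" and L2: "(f has_derivative L2) (at x within S)"
    and "\<delta> > 0" and "p ` {0<..<\<delta>} \<subseteq> S" and "p 0 = x"
    and p: "(p has_vector_derivative v) (at 0 within {0<..<\<delta>})"
  shows "L1 v = L2 v"
proof -
  have "((f \<circ> p) has_vector_derivative L v) (at 0 within {0<..<\<delta>})"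
    if L: "(f has_derivative L) (at x within S)" for L
  proof -
    have "(f has_derivative L) (at (p 0) within p ` {0<..<\<delta>})"
      using has_derivative_subset[OF L \<open>p ` {0<..<\<delta>} \<subseteq> S\<close>] \<open>p 0 = x\<close> by simp
    from diff_chain_within[OF p[unfolded has_vector_derivative_def] this]
    show ?thesis
      using linear_scale[OF has_derivative_linear[OF L]]
      by (simp add: has_vector_derivative_def o_def)
  qed
  moreover have "at 0 within {0<..<\<delta>} \<noteq> bot"
    using trivial_limit_within islimpt_greaterThanLessThan1[OF \<open>\<delta> > 0\<close>] by blast
  ultimately show ?thesis
    using vector_derivative_unique_within L1 L2 by blast
qed

lemma frechet_derivative_within_eq_extension:
  assumes unique: "\<And>L1 L2. (F has_derivative L1) (at z0 within S) \<Longrightarrow>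
      (F has_derivative L2) (at z0 within S) \<Longrightarrow> L1 = L2"
    and "z0 \<in> S" and "open U" and "z0 \<in> U" and G: "(G has_derivative G') (at z0)"
    and eq: "\<And>y. y \<in> S \<inter> U \<Longrightarrow> G y = F y"
  shows "frechet_derivative F (at z0 within S) = G'"
proof -
  obtain d where "d > 0" "ball z0 d \<subseteq> U"
    using \<open>open U\<close> \<open>z0 \<in> U\<close> open_contains_ball by blast
  then have F: "(F has_derivative G') (at z0 within S)"
    by (intro has_derivative_transform_within[OF has_derivative_at_withinI[OF G] _ \<open>z0 \<in> S\<close>])
      (auto simp: dist_commute intro!: eq)
  then have "(F has_derivative frechet_derivative F (at z0 within S)) (at z0 within S)"
    using frechet_derivative_works differentiable_def by blast
  then show ?thesis using unique F by blast
qed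

(* Straightens the curve near \<gamma> t0: the real axis is mapped onto the curve, the imaginary
   axis onto its normal line at \<gamma> t0. *)
definition flatten :: "(real \<Rightarrow> complex) \<Rightarrow> real \<Rightarrow> complex \<Rightarrow> complex" where
  "flatten \<gamma> t0 w = \<gamma> (t0 + Re w) + complex_of_real (Im w) * (\<i> * vector_derivative \<gamma> (at t0))"

context
  fixes \<gamma> :: "real \<Rightarrow> complex"
  assumes curve: "smooth_closed_curve \<gamma>"
begin

lemma has_derivative_flatten:
  "(flatten \<gamma> t0 has_derivative (\<lambda>h. Re h *\<^sub>R vector_derivative \<gamma> (at (t0 + Re w))
      + complex_of_real (Im h) * (\<i> * vector_derivative \<gamma> (at t0)))) (at w)"
proof -
  have "((\<lambda>w. t0 + Re w) has_derivative Re) (at w)"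
    by (auto intro!: derivative_eq_intros)
  from has_derivative_compose[OF this smooth_closed_curve_has_vector_derivative[OF curve,
        unfolded has_vector_derivative_def]]
  have "((\<lambda>w. \<gamma> (t0 + Re w)) has_derivative
      (\<lambda>h. Re h *\<^sub>R vector_derivative \<gamma> (at (t0 + Re w)))) (at w)" .
  moreover have "bounded_linear (\<lambda>h. complex_of_real (Im h) * (\<i> * vector_derivative \<gamma> (at t0)))"
    unfolding linear_conv_bounded_linear[symmetric]
    by (rule linearI) (simp_all add: algebra_simps scaleR_conv_of_real)
  ultimately show ?thesis
    unfolding flatten_def[abs_def] by (intro has_derivative_add bounded_linear_imp_has_derivative)
qed

lemma continuous_on_flatten: "continuous_on UNIV (flatten \<gamma> t0)"
  using has_derivative_flatten by (meson continuous_at_imp_continuous_on has_derivative_continuous)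

lemma Ck_flatten: "Ck (Suc 0) UNIV (flatten \<gamma> t0)"
proof (rule Ck_SucI[OF open_UNIV has_derivative_flatten])
  fix v
  show "Ck 0 UNIV (\<lambda>w. Re v *\<^sub>R vector_derivative \<gamma> (at (t0 + Re w))
      + complex_of_real (Im v) * (\<i> * vector_derivative \<gamma> (at t0)))"
  proof -
    have "continuous_on UNIV (\<lambda>w. vector_derivative \<gamma> (at (t0 + Re w)))"
      by (rule continuous_on_compose2[OF smooth_closed_curve_continuous_derivative[OF curve]])
        (auto intro!: continuous_intros)
    then show ?thesis by (auto intro!: continuous_intros)
  qed
qed

lemma flatten_derivative_nondegenerate:
  "det2 (frechet_derivative (flatten \<gamma> t0) (at 0) 1) (frechet_derivative (flatten \<gamma> t0) (at 0) \<i>) \<noteq> 0"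
proof -
  let ?c = "vector_derivative \<gamma> (at t0)"
  have "?c \<noteq> 0" using curve by (simp add: smooth_closed_curve_def)
  moreover have "det2 ?c (\<i> * ?c) = (cmod ?c)\<^sup>2"
    unfolding cmod_power2 by (simp add: det2_def power2_eq_square)
  ultimately show ?thesis
    by (simp add: frechet_derivative_at[OF has_derivative_flatten, symmetric])
qed

lemma flatten_local_chart:
  obtains \<rho> where "\<rho> > 0" "inj_on (flatten \<gamma> t0) (ball 0 \<rho>)"
    "\<And>w. w \<in> ball 0 \<rho> \<Longrightarrow> flatten \<gamma> t0 w \<in> path_image \<gamma> \<Longrightarrow> Im w = 0"
proof -
  let ?H = "flatten \<gamma> t0"
  obtain U V \<Psi> where U: "open U" "0 \<in> U" and hom: "homeomorphism U V ?H \<Psi>"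
    using inverse_function_theorem_complex[OF open_UNIV Ck_flatten UNIV_I flatten_derivative_nondegenerate]
    by metis
  have inj: "inj_on ?H U"
    using hom by (metis homeomorphism_apply1 inj_on_inverseI)
  obtain r where r: "r > 0" "ball 0 r \<subseteq> U"
    using U open_contains_ball by blast
  obtain e where e: "e > 0"
    and near: "\<And>z. z \<in> path_image \<gamma> \<Longrightarrow> dist z (\<gamma> t0) < e \<Longrightarrow> \<exists>s. \<bar>s - t0\<bar> \<le> r / 2 \<and> z = \<gamma> s"
    using smooth_closed_curve_near_point[OF curve, of "r / 2" t0] r(1) by auto
  have "continuous (at 0) ?H"
    using has_derivative_continuous[OF has_derivative_flatten] .
  then obtain \<rho>0 where \<rho>0: "\<rho>0 > 0" "\<And>w. dist w 0 < \<rho>0 \<Longrightarrow> dist (?H w) (?H 0) < e"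
    using e unfolding continuous_at_eps_delta by blast
  define \<rho> where "\<rho> = min \<rho>0 (r / 2)"
  have ball: "ball 0 \<rho> \<subseteq> U" using r by (auto simp: \<rho>_def)
  show ?thesis
  proof (rule that)
    show "\<rho> > 0" using \<rho>0 r by (simp add: \<rho>_def)
    show "inj_on ?H (ball 0 \<rho>)" using inj_on_subset[OF inj ball] .
  next
    fix w assume w: "w \<in> ball 0 \<rho>" "?H w \<in> path_image \<gamma>"
    have "dist (?H w) (\<gamma> t0) < e"
      using \<rho>0(2)[of w] w(1) by (simp add: \<rho>_def dist_commute flatten_def)
    then obtain s where s: "\<bar>s - t0\<bar> \<le> r / 2" "?H w = \<gamma> s"
      using near w(2) by blast
    have eq: "?H (complex_of_real (s - t0)) = ?H w"
      using s(2) by (simp add: flatten_def)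
    have "complex_of_real (s - t0) \<in> U"
      using s(1) r by (auto simp: dist_norm simp del: of_real_diff)
    moreover have "w \<in> U" using w(1) ball by blast
    ultimately have "complex_of_real (s - t0) = w"
      using inj_onD[OF inj eq] by blast
    then show "Im w = 0" by (metis Im_complex_of_real)
  qed
qed

lemma flatten_meets_inside:
  assumes "\<rho> > 0" and "inj_on (flatten \<gamma> t0) (ball 0 \<rho>)"
  obtains w where "w \<in> ball 0 \<rho>" "flatten \<gamma> t0 w \<in> inside (path_image \<gamma>)" "Im w \<noteq> 0"
proof -
  let ?H = "flatten \<gamma> t0" and ?\<Gamma> = "path_image \<gamma>"
  have "open (?H ` ball 0 \<rho>)"
    using invariance_of_domain[OF continuous_on_subset[OF continuous_on_flatten] open_ball assms(2)]
    by simp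
  moreover have "\<gamma> t0 \<in> ?H ` ball 0 \<rho>"
    using assms(1) by (auto simp: flatten_def intro!: image_eqI[of _ _ 0])
  moreover have "\<gamma> t0 \<in> closure (inside ?\<Gamma>)"
    using Jordan_inside_outside[OF simple_path_smooth_closed_curve[OF curve]
        pathfinish_smooth_closed_curve[OF curve]] smooth_closed_curve_in_path_image[OF curve]
    by (auto simp: frontier_def)
  ultimately obtain w where w: "w \<in> ball 0 \<rho>" "?H w \<in> inside ?\<Gamma>"
    using open_Int_closure_eq_empty[of "?H ` ball 0 \<rho>" "inside ?\<Gamma>"] by blast
  moreover have "Im w \<noteq> 0"
  proof
    assume "Im w = 0"
    then have "?H w \<in> ?\<Gamma>"
      using smooth_closed_curve_in_path_image[OF curve, of "t0 + Re w"] by (simp add: flatten_def)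
    then show False using w(2) inside_no_overlap[of ?\<Gamma>] by blast
  qed
  ultimately show ?thesis using that by blast
qed

(* The chart meets the curve only on the real axis, so it maps each half disc into the complement
   of the curve; the half disc containing a preimage of an inside point is mapped inside. *)
lemma smooth_closed_curve_normal_segment_inside:
  obtains \<rho> \<sigma> where "\<rho> > 0" "\<sigma> = 1 \<or> \<sigma> = -1"
    "\<And>s. s \<in> {0<..<\<rho>} \<Longrightarrow>
      \<gamma> t0 + complex_of_real (\<sigma> * s) * (\<i> * vector_derivative \<gamma> (at t0)) \<in> inside (path_image \<gamma>)"
proof -
  let ?H = "flatten \<gamma> t0" and ?\<Gamma> = "path_image \<gamma>"
  obtain \<rho> where \<rho>: "\<rho> > 0" "inj_on ?H (ball 0 \<rho>)"
    and chart: "\<And>w. w \<in> ball 0 \<rho> \<Longrightarrow> ?H w \<in> ?\<Gamma> \<Longrightarrow> Im w = 0"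
    using flatten_local_chart by blast
  obtain w where w: "w \<in> ball 0 \<rho>" "?H w \<in> inside ?\<Gamma>" "Im w \<noteq> 0"
    using flatten_meets_inside[OF \<rho>] by blast
  define \<sigma> :: real where "\<sigma> = (if Im w > 0 then 1 else -1)"
  define B where "B = ball 0 \<rho> \<inter> {x. 0 < inner (complex_of_real \<sigma> * \<i>) x}"
  have inner: "inner (complex_of_real \<sigma> * \<i>) x = \<sigma> * Im x" for x
    by (simp add: inner_complex_def)
  have "connected (?H ` B)"
    unfolding B_def
    by (intro connected_continuous_image continuous_on_subset[OF continuous_on_flatten] convex_connected
        convex_Int convex_ball convex_halfspace_gt) simp
  moreover have "?H ` B \<inter> ?\<Gamma> = {}"
    using chart by (auto simp: B_def inner)
  moreover have "w \<in> B"
    using w(1,3) by (auto simp: B_def inner \<sigma>_def)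
  ultimately have inside: "?H ` B \<subseteq> inside ?\<Gamma>"
    using connected_subset_inside w(2) by blast
  show ?thesis
  proof (rule that[OF \<rho>(1)])
    show "\<sigma> = 1 \<or> \<sigma> = -1" by (simp add: \<sigma>_def)
    fix s assume "s \<in> {0<..<\<rho>}"
    then have "\<i> * complex_of_real (\<sigma> * s) \<in> B"
      by (auto simp: B_def inner \<sigma>_def norm_mult)
    then show "\<gamma> t0 + complex_of_real (\<sigma> * s) * (\<i> * vector_derivative \<gamma> (at t0)) \<in> inside ?\<Gamma>"
      using inside by (force simp: flatten_def)
  qed
qed

lemma has_derivative_within_closed_inside_unique:
  fixes f :: "complex \<Rightarrow> complex"
  defines "S \<equiv> inside (path_image \<gamma>) \<union> path_image \<gamma>"
  assumes "z0 \<in> S" and L1: "(f has_derivative L1) (at z0 within S)"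
    and L2: "(f has_derivative L2) (at z0 within S)"
  shows "L1 = L2"
proof (cases "z0 \<in> inside (path_image \<gamma>)")
  case True
  have "open (inside (path_image \<gamma>))"
    using Jordan_inside_outside[OF simple_path_smooth_closed_curve[OF curve]
        pathfinish_smooth_closed_curve[OF curve]] by blast
  then have "z0 \<in> interior S"
    using True interior_maximal[of "inside (path_image \<gamma>)" S] by (auto simp: S_def)
  then show ?thesis
    using L1 L2 has_derivative_unique at_within_interior by metis
next
  case False
  then obtain t0 where t0: "z0 = \<gamma> t0"
    using \<open>z0 \<in> S\<close> by (auto simp: S_def path_image_def)
  let ?c = "vector_derivative \<gamma> (at t0)"
  obtain \<rho> \<sigma> where "\<rho> > 0" "\<sigma> = 1 \<or> \<sigma> = -1"
    and segment: "\<And>s. s \<in> {0<..<\<rho>} \<Longrightarrow> z0 + complex_of_real (\<sigma> * s) * (\<i> * ?c) \<in> inside (path_image \<gamma>)"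
    using smooth_closed_curve_normal_segment_inside t0 by metis
  have lin: "linear L1" "linear L2"
    using L1 L2 has_derivative_linear by blast+
  have tangent: "L1 ?c = L2 ?c"
    using has_derivative_within_eq_along_path[OF L1 L2 zero_less_one _ _
        smooth_closed_curve_shift_has_vector_derivative[OF curve, of t0]] t0
      smooth_closed_curve_in_path_image[OF curve] by (auto simp: S_def)
  have "((\<lambda>s. z0 + complex_of_real (\<sigma> * s) * (\<i> * ?c)) has_vector_derivative
      complex_of_real \<sigma> * (\<i> * ?c)) (at 0 within {0<..<\<rho>})"
    by (auto intro!: derivative_eq_intros simp: has_vector_derivative_def scaleR_conv_of_real)
  moreover have "(\<lambda>s. z0 + complex_of_real (\<sigma> * s) * (\<i> * ?c)) ` {0<..<\<rho>} \<subseteq> S"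
    unfolding S_def by (intro image_subsetI UnI1 segment)
  ultimately have "L1 (complex_of_real \<sigma> * (\<i> * ?c)) = L2 (complex_of_real \<sigma> * (\<i> * ?c))"
    using has_derivative_within_eq_along_path[OF L1 L2 \<open>\<rho> > 0\<close>] by simp
  then have "\<sigma> *\<^sub>R L1 (\<i> * ?c) = \<sigma> *\<^sub>R L2 (\<i> * ?c)"
    by (simp add: scaleR_conv_of_real[symmetric] linear_scale[OF lin(1)] linear_scale[OF lin(2)])
  then have normal: "L1 (\<i> * ?c) = L2 (\<i> * ?c)"
    using \<open>\<sigma> = 1 \<or> \<sigma> = -1\<close> by auto
  have "?c \<noteq> 0" using curve by (simp add: smooth_closed_curve_def)
  then show ?thesis using real_linear_eqI_complex[OF lin _ tangent normal] by blast
qed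

end

section \<open>Boundary-fixing local injections of a closed Jordan domain\<close>

locale boundary_fixing_local_injection =
  fixes c :: "real \<Rightarrow> complex" and \<phi> :: "complex \<Rightarrow> complex"
  assumes simple: "simple_path c" and loop: "pathfinish c = pathstart c"
    and continuous: "continuous_on (inside (path_image c) \<union> path_image c) \<phi>"
    and fixes_boundary: "\<And>z. z \<in> path_image c \<Longrightarrow> \<phi> z = z"
    and locally_injective: "\<And>z. z \<in> inside (path_image c) \<union> path_image c \<Longrightarrow>
      \<exists>N. open N \<and> z \<in> N \<and> inj_on \<phi> (N \<inter> (inside (path_image c) \<union> path_image c))"
begin

abbreviation "\<Gamma> \<equiv> path_image c"
abbreviation "D \<equiv> inside \<Gamma> \<union> \<Gamma>"

lemma open_inside: "open (inside \<Gamma>)" and connected_inside: "connected (inside \<Gamma>)"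
  and connected_outside: "connected (outside \<Gamma>)" and unbounded_outside: "\<not> bounded (outside \<Gamma>)"
  and frontier_inside: "frontier (inside \<Gamma>) = \<Gamma>" and frontier_outside: "frontier (outside \<Gamma>) = \<Gamma>"
  using Jordan_inside_outside[OF simple loop] by auto

lemma compact_D: "compact D"
proof -
  have "D = closure (inside \<Gamma>)"
    using closure_Un_frontier[of "inside \<Gamma>"] frontier_inside by simp
  moreover have "bounded D"
    using bounded_inside[OF compact_imp_bounded[OF compact_simple_path_image[OF simple]]]
      compact_imp_bounded[OF compact_simple_path_image[OF simple]] by simp
  ultimately show ?thesis by (metis closed_closure compact_eq_bounded_closed)
qed

lemma open_image_inside:
  assumes "open N" and "N \<subseteq> inside \<Gamma>"
  shows "open (\<phi> ` N)"
  unfolding open_subopen[of "\<phi> ` N"]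
proof
  fix y assume "y \<in> \<phi> ` N"
  then obtain z where z: "z \<in> N" "y = \<phi> z" by auto
  obtain M where M: "open M" "z \<in> M" "inj_on \<phi> (M \<inter> D)"
    using locally_injective z(1) assms(2) by blast
  have "M \<inter> N \<subseteq> D" using assms(2) by blast
  then have "open (\<phi> ` (M \<inter> N))"
    using invariance_of_domain[OF continuous_on_subset[OF continuous] open_Int[OF M(1) assms(1)]]
      inj_on_subset[OF M(3)] by blast
  then show "\<exists>T. open T \<and> y \<in> T \<and> T \<subseteq> \<phi> ` N" using z M by blast
qed

lemma image_boundary: "\<phi> ` \<Gamma> = \<Gamma>"
  using fixes_boundary by force

lemma frontier_image_subset: "frontier (\<phi> ` D) \<subseteq> \<Gamma>"
proof
  fix w assume w: "w \<in> frontier (\<phi> ` D)"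
  have "closed (\<phi> ` D)"
    using compact_imp_closed[OF compact_continuous_image[OF continuous compact_D]] .
  then have "w \<in> \<phi> ` D" using w unfolding frontier_def by auto
  moreover have "\<phi> ` inside \<Gamma> \<subseteq> interior (\<phi> ` D)"
    by (rule interior_maximal[OF image_mono[OF Un_upper1] open_image_inside[OF open_inside order_refl]])
  then have "w \<notin> \<phi> ` inside \<Gamma>" using w unfolding frontier_def by blast
  ultimately show "w \<in> \<Gamma>" using image_boundary by auto
qed

lemma outside_disjoint_image: "outside \<Gamma> \<inter> \<phi> ` D = {}"
proof (rule ccontr)
  assume "outside \<Gamma> \<inter> \<phi> ` D \<noteq> {}"
  moreover have "outside \<Gamma> \<inter> frontier (\<phi> ` D) = {}"
    using frontier_image_subset outside_no_overlap by blast
  ultimately have "outside \<Gamma> \<subseteq> \<phi> ` D"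
    using connected_subset_if_frontier_disjoint[OF connected_outside] by blast
  then show False
    using unbounded_outside bounded_subset
      compact_imp_bounded[OF compact_continuous_image[OF continuous compact_D]] by blast
qed

lemma image_inside_subset: "\<phi> ` inside \<Gamma> \<subseteq> inside \<Gamma>"
proof
  fix w assume w: "w \<in> \<phi> ` inside \<Gamma>"
  have "w \<notin> outside \<Gamma>" using w outside_disjoint_image by blast
  moreover have "w \<notin> \<Gamma>"
  proof
    assume "w \<in> \<Gamma>"
    then have "w \<in> closure (outside \<Gamma>)" using frontier_outside unfolding frontier_def by auto
    then have "\<phi> ` inside \<Gamma> \<inter> outside \<Gamma> \<noteq> {}"
      using open_Int_closure_eq_empty[OF open_image_inside[OF open_inside order_refl]] w by blast
    then show False using outside_disjoint_image by blast
  qed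
  ultimately show "w \<in> inside \<Gamma>" using inside_Un_outside[of \<Gamma>] by blast
qed

lemma image_eq: "\<phi> ` D = D"
proof -
  have "inside \<Gamma> \<inter> frontier (\<phi> ` D) = {}"
    using frontier_image_subset inside_no_overlap by blast
  moreover obtain z where "z \<in> inside \<Gamma>"
    using Jordan_inside_outside[OF simple loop] by blast
  then have "inside \<Gamma> \<inter> \<phi> ` D \<noteq> {}"
    using image_inside_subset by blast
  ultimately have "inside \<Gamma> \<subseteq> \<phi> ` D"
    using connected_subset_if_frontier_disjoint[OF connected_inside] by blast
  then show ?thesis
    using image_inside_subset image_boundary by auto
qed

lemma inside_if_image_inside: "z \<in> D \<Longrightarrow> \<phi> z \<in> inside \<Gamma> \<Longrightarrow> z \<in> inside \<Gamma>"
  using fixes_boundary inside_no_overlap by auto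

lemma fixed_if_image_boundary: "z \<in> D \<Longrightarrow> \<phi> z \<in> \<Gamma> \<Longrightarrow> \<phi> z = z"
  using fixes_boundary image_inside_subset inside_no_overlap by blast

definition double_points :: "(complex \<times> complex) set" where
  "double_points = {p \<in> D \<times> D. \<phi> (fst p) = \<phi> (snd p) \<and> fst p \<noteq> snd p}"

lemma closed_double_points: "closed double_points"
  unfolding closed_sequential_limits
proof (intro allI impI, elim conjE)
  fix x :: "nat \<Rightarrow> complex \<times> complex" and l
  assume x: "\<forall>n. x n \<in> double_points" and lim: "x \<longlonglongrightarrow> l"
  obtain a b where l: "l = (a, b)" by (cases l)
  have a: "(\<lambda>n. fst (x n)) \<longlonglongrightarrow> a" and b: "(\<lambda>n. snd (x n)) \<longlonglongrightarrow> b"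
    using tendsto_fst[OF lim] tendsto_snd[OF lim] l by simp_all
  have D: "fst (x n) \<in> D" "snd (x n) \<in> D" for n
    using spec[OF x, of n] unfolding double_points_def mem_Times_iff by blast+
  have "a \<in> D" "b \<in> D"
    using closed_sequentially[OF compact_imp_closed[OF compact_D]] D a b by metis+
  have "(\<lambda>n. \<phi> (fst (x n))) \<longlonglongrightarrow> \<phi> a" "(\<lambda>n. \<phi> (snd (x n))) \<longlonglongrightarrow> \<phi> b"
    using continuous_on_tendsto_compose[OF continuous a \<open>a \<in> D\<close>]
      continuous_on_tendsto_compose[OF continuous b \<open>b \<in> D\<close>] D by simp_all
  moreover have "(\<lambda>n. \<phi> (fst (x n))) = (\<lambda>n. \<phi> (snd (x n)))"
    using x by (auto simp: double_points_def)
  ultimately have "\<phi> a = \<phi> b" using LIMSEQ_unique by metis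
  moreover have "a \<noteq> b"
  proof
    assume "a = b"
    obtain N where N: "open N" "a \<in> N" "inj_on \<phi> (N \<inter> D)"
      using locally_injective \<open>a \<in> D\<close> by blast
    have "eventually (\<lambda>n. fst (x n) \<in> N \<and> snd (x n) \<in> N) sequentially"
      using topological_tendstoD[OF a N(1,2)] topological_tendstoD[OF b N(1)] N(2) \<open>a = b\<close>
      by (auto intro: eventually_conj)
    then obtain n where "fst (x n) \<in> N" "snd (x n) \<in> N"
      using eventually_sequentially by auto
    moreover have "\<phi> (fst (x n)) = \<phi> (snd (x n))"
      using spec[OF x, of n] by (simp add: double_points_def)
    ultimately have "fst (x n) = snd (x n)"
      using inj_onD[OF N(3)] D by blast
    then show False using x by (auto simp: double_points_def)
  qed
  ultimately show "l \<in> double_points"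
    unfolding double_points_def l using \<open>a \<in> D\<close> \<open>b \<in> D\<close> by simp
qed

definition double_values :: "complex set" where
  "double_values = (\<lambda>p. \<phi> (fst p)) ` double_points"

lemma compact_double_values: "compact double_values"
proof -
  have "double_points \<subseteq> D \<times> D" by (auto simp: double_points_def)
  then have "compact double_points"
    using closed_double_points compact_D compact_Times bounded_subset compact_eq_bounded_closed
    by metis
  moreover have "continuous_on double_points (\<lambda>p. \<phi> (fst p))"
    by (rule continuous_on_compose2[OF continuous continuous_on_fst]) (auto simp: double_points_def)
  ultimately show ?thesis
    unfolding double_values_def using compact_continuous_image by blast
qed

lemma double_values_disjoint_boundary: "double_values \<inter> \<Gamma> = {}"
proof -
  have False if "(a, b) \<in> double_points" "\<phi> a \<in> \<Gamma>" for a b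
  proof -
    have "a \<in> D" "b \<in> D" "\<phi> a = \<phi> b" "a \<noteq> b"
      using that(1) by (auto simp: double_points_def)
    then show False
      using fixed_if_image_boundary that(2) by metis
  qed
  then show ?thesis by (force simp: double_values_def)
qed

lemma open_double_values_inside: "open (double_values \<inter> inside \<Gamma>)"
  unfolding open_subopen[of "double_values \<inter> inside \<Gamma>"]
proof
  fix w assume "w \<in> double_values \<inter> inside \<Gamma>"
  then obtain p where p: "p \<in> double_points" "w = \<phi> (fst p)" and w: "w \<in> inside \<Gamma>"
    by (auto simp: double_values_def)
  define a b where "a = fst p" and "b = snd p"
  have ab: "a \<in> D" "b \<in> D" "\<phi> a = w" "\<phi> b = w" "a \<noteq> b"
    using p by (auto simp: double_points_def a_def b_def)
  have "a \<in> inside \<Gamma>" "b \<in> inside \<Gamma>"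
    using inside_if_image_inside[of a] inside_if_image_inside[of b] ab w by simp_all
  obtain Na Nb where N: "open Na" "open Nb" "a \<in> Na" "b \<in> Nb" "Na \<inter> Nb = {}"
    using separation_t2[of a b] ab(5) by blast
  define T where "T = \<phi> ` (Na \<inter> inside \<Gamma>) \<inter> \<phi> ` (Nb \<inter> inside \<Gamma>)"
  have "open T"
    unfolding T_def using N open_inside by (intro open_Int open_image_inside) auto
  moreover have "w \<in> T"
    unfolding T_def using ab(3,4) N(3,4) \<open>a \<in> inside \<Gamma>\<close> \<open>b \<in> inside \<Gamma>\<close>
    by (metis IntI image_eqI)
  moreover have "T \<subseteq> double_values \<inter> inside \<Gamma>"
  proof
    fix w' assume "w' \<in> T"
    then obtain a' b' where "a' \<in> Na \<inter> inside \<Gamma>" "b' \<in> Nb \<inter> inside \<Gamma>" "\<phi> a' = w'" "\<phi> b' = w'"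
      unfolding T_def by auto
    moreover have "a' \<noteq> b'" using calculation N(5) by blast
    ultimately have "(a', b') \<in> double_points" "w' \<in> inside \<Gamma>"
      using image_inside_subset by (auto simp: double_points_def)
    then show "w' \<in> double_values \<inter> inside \<Gamma>"
      unfolding double_values_def using \<open>\<phi> a' = w'\<close> by force
  qed
  ultimately show "\<exists>T. open T \<and> w \<in> T \<and> T \<subseteq> double_values \<inter> inside \<Gamma>" by blast
qed

(* The double values form a clopen subset of the connected set inside \<Gamma>; it is not all of
   inside \<Gamma> because, being compact and disjoint from \<Gamma>, it stays away from \<Gamma>. *)
lemma double_values_inside_empty: "double_values \<inter> inside \<Gamma> = {}"
proof (rule ccontr)
  let ?A = "double_values \<inter> inside \<Gamma>"
  assume "?A \<noteq> {}"
  then have "inside \<Gamma> \<inter> ?A \<noteq> {}" by blast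
  moreover have "inside \<Gamma> - ?A \<noteq> {}"
  proof -
    have "pathstart c \<in> \<Gamma>" by (rule pathstart_in_path_image)
    then have "pathstart c \<in> - double_values"
      using double_values_disjoint_boundary by blast
    moreover have "open (- double_values)"
      using compact_imp_closed[OF compact_double_values] by (simp add: open_Compl)
    ultimately obtain e where e: "e > 0" "ball (pathstart c) e \<subseteq> - double_values"
      using open_contains_ball by blast
    have "pathstart c \<in> closure (inside \<Gamma>)"
      using frontier_inside \<open>pathstart c \<in> \<Gamma>\<close> unfolding frontier_def by auto
    then have "ball (pathstart c) e \<inter> inside \<Gamma> \<noteq> {}"
      using open_Int_closure_eq_empty[OF open_ball, of "pathstart c" e "inside \<Gamma>"] e(1)
        centre_in_ball[of "pathstart c" e] by blast
    then show ?thesis using e(2) by blast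
  qed
  ultimately have "inside \<Gamma> \<inter> frontier ?A \<noteq> {}"
    by (rule connected_Int_frontier[OF connected_inside])
  moreover have "closure ?A \<subseteq> double_values"
    using closure_minimal[OF _ compact_imp_closed[OF compact_double_values]] by blast
  then have "inside \<Gamma> \<inter> frontier ?A = {}"
    using interior_open[OF open_double_values_inside] unfolding frontier_def by auto
  ultimately show False by blast
qed

lemma inj_on_D: "inj_on \<phi> D"
proof -
  have "double_values \<subseteq> \<phi> ` D"
    by (auto simp: double_values_def double_points_def)
  then have "double_values = {}"
    using image_eq double_values_inside_empty double_values_disjoint_boundary by blast
  then have "double_points = {}"
    by (simp add: double_values_def)
  show ?thesis
  proof (rule inj_onI)
    fix x y assume "x \<in> D" "y \<in> D" "\<phi> x = \<phi> y"
    moreover have "(x, y) \<notin> double_points"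
      using \<open>double_points = {}\<close> by blast
    ultimately show "x = y" by (auto simp: double_points_def)
  qed
qed

lemma homeomorphism_D: "\<exists>\<psi>. homeomorphism D D \<phi> \<psi>"
  using homeomorphism_compact[OF compact_D continuous image_eq inj_on_D] .

end

section \<open>Smooth maps on subsets and the graph projection\<close>

lemma smooth_on_set_continuous_on:
  assumes "smooth_on_set S f"
  shows "continuous_on S f"
proof -
  have "continuous (at x within S) f" if "x \<in> S" for x
  proof -
    have "\<exists>U g. x \<in> U \<and> smooth_open U g \<and> (\<forall>y\<in>S \<inter> U. g y = f y)"
      using assms that unfolding smooth_on_set_def by (rule bspec)
    then obtain U g where U: "x \<in> U" "smooth_open U g" and eq: "\<forall>y\<in>S \<inter> U. g y = f y"
      by blast
    obtain d where d: "d > 0" "ball x d \<subseteq> U"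
      using open_contains_ball_eq[OF smooth_open_imp_open[OF U(2)]] U(1) by blast
    have "continuous (at x within S) g"
      using has_derivative_continuous[OF has_derivative_at_withinI[OF smooth_open_has_derivative[OF U(2,1)]]] .
    then show ?thesis
      by (rule continuous_transform_within[OF _ d(1) that])
        (metis IntI eq d(2) mem_ball dist_commute subsetD)
  qed
  then show ?thesis using continuous_on_eq_continuous_within by blast
qed

lemma smooth_on_set_bounded_linear: "bounded_linear L \<Longrightarrow> smooth_on_set S L"
  unfolding smooth_on_set_def using smooth_open_bounded_linear[OF open_UNIV] by blast

lemma smooth_on_set_diagonal_Pair:
  assumes "smooth_on_set S a" and "smooth_on_set S b"
  shows "smooth_on_set ((\<lambda>z. (z, z)) ` S) (\<lambda>p. (a (fst p), b (fst p)))"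
  unfolding smooth_on_set_def
proof
  fix x assume "x \<in> (\<lambda>z. (z, z)) ` S"
  then obtain z where z: "z \<in> S" "x = (z, z)" by blast
  obtain Ua A where Ua: "z \<in> Ua" "smooth_open Ua A" "\<forall>y\<in>S \<inter> Ua. A y = a y"
    using assms(1) z(1) unfolding smooth_on_set_def by blast
  obtain Ub B where Ub: "z \<in> Ub" "smooth_open Ub B" "\<forall>y\<in>S \<inter> Ub. B y = b y"
    using assms(2) z(1) unfolding smooth_on_set_def by blast
  let ?U = "Ua \<inter> Ub"
  have "open ?U" using smooth_open_imp_open[OF Ua(2)] smooth_open_imp_open[OF Ub(2)] by blast
  then have "smooth_open (?U \<times> UNIV) (\<lambda>p::'a \<times> 'a. (A (fst p), B (fst p)))"
    by (intro smooth_open_Pair smooth_open_fst_compose smooth_open_subset[OF Ua(2)]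
        smooth_open_subset[OF Ub(2)]) auto
  moreover have "\<forall>y\<in>(\<lambda>z. (z, z)) ` S \<inter> (?U \<times> UNIV). (A (fst y), B (fst y)) = (a (fst y), b (fst y))"
    using Ua(3) Ub(3) by auto
  ultimately show "\<exists>U g. x \<in> U \<and> smooth_open U g \<and>
      (\<forall>y\<in>(\<lambda>z. (z, z)) ` S \<inter> U. g y = (a (fst y), b (fst y)))"
    using z(2) Ua(1) Ub(1) by (intro exI[of _ "?U \<times> UNIV"] exI) auto
qed

lemma smooth_on_set_inverse:
  assumes hom: "homeomorphism S T \<phi> \<psi>"
    and local: "\<And>z0. z0 \<in> S \<Longrightarrow> \<exists>U V \<Phi> \<Psi> H. open U \<and> z0 \<in> U \<and> homeomorphism U V \<Phi> \<Psi> \<and>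
      (\<forall>z\<in>S \<inter> U. \<Phi> z = \<phi> z \<and> H z = h z) \<and> smooth_open V \<Psi> \<and> smooth_open V (\<lambda>y. H (\<Psi> y))"
  shows "smooth_on_set T \<psi>" and "smooth_on_set T (\<lambda>w. h (\<psi> w))"
proof -
  have "\<exists>V \<Psi> H. w0 \<in> V \<and> smooth_open V \<Psi> \<and> smooth_open V (\<lambda>y. H (\<Psi> y)) \<and>
      (\<forall>w\<in>T \<inter> V. \<Psi> w = \<psi> w \<and> H (\<Psi> w) = h (\<psi> w))" if "w0 \<in> T" for w0
  proof -
    have z0: "\<psi> w0 \<in> S" "\<phi> (\<psi> w0) = w0"
      using hom that by (auto simp: homeomorphism_def)
    obtain U V \<Phi> \<Psi> H where U: "open U" "\<psi> w0 \<in> U" and homU: "homeomorphism U V \<Phi> \<Psi>"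
      and eq: "\<forall>z\<in>S \<inter> U. \<Phi> z = \<phi> z \<and> H z = h z"
      and smooth: "smooth_open V \<Psi>" "smooth_open V (\<lambda>y. H (\<Psi> y))"
      using local[OF z0(1)] by blast
    obtain N where N: "open N" "N \<inter> T = \<psi> -` U \<inter> T"
      using homeomorphism_cont2[OF hom] U(1) unfolding continuous_on_open_invariant by blast
    have "w0 \<in> V"
      using homeomorphism_image1[OF homU] U(2) eq z0 by force
    then have "w0 \<in> V \<inter> N" using N that U(2) by blast
    moreover have "open (V \<inter> N)"
      using smooth_open_imp_open[OF smooth(1)] N(1) by blast
    moreover have pre: "\<psi> w \<in> S \<inter> U" "\<phi> (\<psi> w) = w" if "w \<in> T \<inter> (V \<inter> N)" for w
      using that N hom by (auto simp: homeomorphism_def)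
    moreover have "\<Psi> w = \<psi> w" if "w \<in> T \<inter> (V \<inter> N)" for w
    proof -
      have "\<psi> w \<in> S \<inter> U" "\<phi> (\<psi> w) = w"
        using pre[OF that] by blast+
      then have "\<Phi> (\<psi> w) = w" using eq by simp
      then have "\<Psi> w = \<Psi> (\<Phi> (\<psi> w))" by simp
      also have "\<dots> = \<psi> w"
        using homeomorphism_apply1[OF homU] \<open>\<psi> w \<in> S \<inter> U\<close> by blast
      finally show ?thesis .
    qed
    moreover have "H (\<psi> w) = h (\<psi> w)" if "w \<in> T \<inter> (V \<inter> N)" for w
      using pre(1)[OF that] eq by blast
    ultimately show ?thesis
      using smooth_open_subset[OF smooth(1)] smooth_open_subset[OF smooth(2)]
      by (intro exI[of _ "V \<inter> N"] exI[of _ \<Psi>] exI[of _ H]) auto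
  qed
  then show "smooth_on_set T \<psi>" and "smooth_on_set T (\<lambda>w. h (\<psi> w))"
    unfolding smooth_on_set_def by metis+
qed

lemma bounded_linear_midpoint_diagonal:
  "bounded_linear (\<lambda>(z1::complex, z2). ((z1 + z2) / 2, (z1 + z2) / 2))"
  unfolding linear_conv_bounded_linear[symmetric]
  by (rule linearI) (auto simp: split_beta algebra_simps add_divide_distrib scaleR_conv_of_real)

lemma diffeomorphism_onto_graph_projection:
  fixes F \<psi> :: "complex \<Rightarrow> complex"
  assumes left: "\<And>z. z \<in> D \<Longrightarrow> \<psi> ((z + F z) / 2) = z"
    and right: "\<And>w. w \<in> D \<Longrightarrow> (\<psi> w + F (\<psi> w)) / 2 = w"
    and image: "\<psi> ` D = D"
    and smooth: "smooth_on_set D \<psi>" "smooth_on_set D (\<lambda>w. F (\<psi> w))"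
  shows "diffeomorphism_onto ((\<lambda>z. (z, F z)) ` D) ((\<lambda>z. (z, z)) ` D)
           (\<lambda>(z1, z2). ((z1 + z2) / 2, (z1 + z2) / 2))"
  unfolding diffeomorphism_onto_def
proof (intro conjI exI)
  let ?pr = "\<lambda>(z1::complex, z2). ((z1 + z2) / 2, (z1 + z2) / 2)"
  let ?g = "\<lambda>p::complex \<times> complex. (\<psi> (fst p), F (\<psi> (fst p)))"
  show "smooth_on_set ((\<lambda>z. (z, F z)) ` D) ?pr"
    by (rule smooth_on_set_bounded_linear[OF bounded_linear_midpoint_diagonal])
  show "smooth_on_set ((\<lambda>z. (z, z)) ` D) ?g"
    by (rule smooth_on_set_diagonal_Pair[OF smooth])
  have "(\<lambda>z. (z + F z) / 2) ` D = (\<lambda>z. (z + F z) / 2) ` \<psi> ` D"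
    using image by simp
  also have "\<dots> = (\<lambda>w. w) ` D"
    unfolding image_image by (rule image_cong[OF refl right])
  finally have "(\<lambda>z. (z + F z) / 2) ` D = D" by simp
  then show "?pr ` (\<lambda>z. (z, F z)) ` D = (\<lambda>z. (z, z)) ` D"
    by (auto simp: image_image)
  show "?g ` (\<lambda>z. (z, z)) ` D = (\<lambda>z. (z, F z)) ` D"
    using image by (auto simp: image_image)
  show "\<forall>x\<in>(\<lambda>z. (z, F z)) ` D. ?g (?pr x) = x"
    using left by auto
  show "\<forall>y\<in>(\<lambda>z. (z, z)) ` D. ?pr (?g y) = y"
    using right by auto
qed

section \<open>The midpoint map\<close>

lemma det2_midpoint: "det2 ((1 + p) / 2) ((\<i> + q) / 2) = (1 + Re p + Im q + det2 p q) / 4"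
  by (simp add: det2_def field_simps)

lemma midpoint_map_local_inverse:
  assumes G: "smooth_open U G" and "z0 \<in> U"
    and det: "det2 (frechet_derivative G (at z0) 1) (frechet_derivative G (at z0) \<i>) = 1"
    and trace: "2 + Re (frechet_derivative G (at z0) 1) + Im (frechet_derivative G (at z0) \<i>) \<noteq> 0"
  obtains U' V \<Psi> where "open U'" "U' \<subseteq> U" "z0 \<in> U'" "homeomorphism U' V (\<lambda>z. (z + G z) / 2) \<Psi>"
    "smooth_open V \<Psi>" "smooth_open V (\<lambda>y. G (\<Psi> y))"
proof -
  let ?\<Phi> = "\<lambda>z. (z + G z) / 2"
  have U: "open U" using G by (rule smooth_open_imp_open)
  have smooth: "smooth_open U ?\<Phi>"
    using smooth_open_bounded_linear_compose[OF bounded_linear_divide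
        smooth_open_add[OF smooth_open_ident[OF U] G]] .
  have "(?\<Phi> has_derivative (\<lambda>h. (h + frechet_derivative G (at z0) h) / 2)) (at z0)"
    using smooth_open_has_derivative[OF G \<open>z0 \<in> U\<close>] by (auto intro!: derivative_eq_intros)
  then have "det2 (frechet_derivative ?\<Phi> (at z0) 1) (frechet_derivative ?\<Phi> (at z0) \<i>) \<noteq> 0"
    using det trace by (simp add: frechet_derivative_at[symmetric] det2_midpoint)
  then obtain U' V \<Psi> where "open U'" "U' \<subseteq> U" "z0 \<in> U'" "open V" "homeomorphism U' V ?\<Phi> \<Psi>"
    and inverse: "\<And>h :: complex \<Rightarrow> complex. smooth_open U h \<Longrightarrow> smooth_open V (\<lambda>y. h (\<Psi> y))"
    using smooth_local_inverse[OF smooth \<open>z0 \<in> U\<close>] by metis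
  then show ?thesis
    using that inverse[OF smooth_open_ident[OF U]] inverse[OF G] by blast
qed

lemma jacobian_of_smooth_extension:
  assumes "symplectomorphism D F" and "moderate D F" and "z0 \<in> D"
    and unique: "\<And>L1 L2. (F has_derivative L1) (at z0 within D) \<Longrightarrow>
      (F has_derivative L2) (at z0 within D) \<Longrightarrow> L1 = L2"
    and "z0 \<in> U" and G: "smooth_open U G" and "\<forall>y\<in>D \<inter> U. G y = F y"
  shows "det2 (frechet_derivative G (at z0) 1) (frechet_derivative G (at z0) \<i>) = 1"
    and "2 + Re (frechet_derivative G (at z0) 1) + Im (frechet_derivative G (at z0) \<i>) \<noteq> 0"
proof -
  have "frechet_derivative F (at z0 within D) = frechet_derivative G (at z0)"
    using frechet_derivative_within_eq_extension[OF unique \<open>z0 \<in> D\<close> smooth_open_imp_open[OF G]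
        \<open>z0 \<in> U\<close> smooth_open_has_derivative[OF G \<open>z0 \<in> U\<close>]] assms(7) by blast
  then show "det2 (frechet_derivative G (at z0) 1) (frechet_derivative G (at z0) \<i>) = 1"
    and "2 + Re (frechet_derivative G (at z0) 1) + Im (frechet_derivative G (at z0) \<i>) \<noteq> 0"
    using assms(1-3) unfolding symplectomorphism_def jac_det_def moderate_def det2_def Let_def
    by auto
qed

lemma midpoint_map_locally_invertible:
  assumes curve: "smooth_closed_curve \<gamma>" and D: "D = inside (path_image \<gamma>) \<union> path_image \<gamma>"
    and "symplectomorphism D F" and "moderate D F" and "z0 \<in> D"
  shows "\<exists>U V \<Phi> \<Psi> G. open U \<and> z0 \<in> U \<and> homeomorphism U V \<Phi> \<Psi> \<and>
      (\<forall>z\<in>D \<inter> U. \<Phi> z = (z + F z) / 2 \<and> G z = F z) \<and>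
      smooth_open V \<Psi> \<and> smooth_open V (\<lambda>y. G (\<Psi> y))"
proof -
  obtain U G where U: "z0 \<in> U" "smooth_open U G" "\<forall>y\<in>D \<inter> U. G y = F y"
    using assms(3,5) unfolding symplectomorphism_def diffeomorphism_onto_def smooth_on_set_def by blast
  have "\<And>L1 L2. (F has_derivative L1) (at z0 within D) \<Longrightarrow>
      (F has_derivative L2) (at z0 within D) \<Longrightarrow> L1 = L2"
    using has_derivative_within_closed_inside_unique[OF curve] \<open>z0 \<in> D\<close> unfolding D by blast
  note jacobian = jacobian_of_smooth_extension[OF assms(3-5) this U]
  obtain U' V \<Psi> where U': "open U'" "U' \<subseteq> U" "z0 \<in> U'"
    and inverse: "homeomorphism U' V (\<lambda>z. (z + G z) / 2) \<Psi>" "smooth_open V \<Psi>"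
      "smooth_open V (\<lambda>y. G (\<Psi> y))"
    using midpoint_map_local_inverse[OF U(2,1) jacobian] by blast
  have "\<forall>z\<in>D \<inter> U'. (z + G z) / 2 = (z + F z) / 2 \<and> G z = F z"
    using U(3) U'(2) by auto
  then show ?thesis
    by (intro exI[of _ U'] exI[of _ V] exI[of _ "\<lambda>z. (z + G z) / 2"] exI[of _ \<Psi>] exI[of _ G]
        conjI U'(1,3) inverse)
qed

lemma inj_on_if_agrees_with_homeomorphism:
  assumes "homeomorphism U V \<Phi> \<Psi>" and "\<forall>z\<in>S \<inter> U. \<Phi> z = \<phi> z"
  shows "inj_on \<phi> (U \<inter> S)"
proof -
  have "inj_on \<Phi> U"
    using assms(1) by (metis homeomorphism_apply1 inj_on_inverseI)
  then have "inj_on \<Phi> (U \<inter> S)"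
    by (rule inj_on_subset) blast
  then show ?thesis
    using inj_on_cong[of "U \<inter> S" \<Phi> \<phi>] assms(2) by blast
qed

lemma midpoint_map_homeomorphism:
  assumes curve: "smooth_closed_curve \<gamma>" and D: "D = inside (path_image \<gamma>) \<union> path_image \<gamma>"
    and "symplectomorphism D F" and "moderate D F" and "\<forall>t. F (\<gamma> t) = \<gamma> t"
  obtains \<psi> where "homeomorphism D D (\<lambda>z. (z + F z) / 2) \<psi>"
proof -
  interpret boundary_fixing_local_injection \<gamma> "\<lambda>z. (z + F z) / 2"
  proof
    show "simple_path \<gamma>" and "pathfinish \<gamma> = pathstart \<gamma>"
      using simple_path_smooth_closed_curve pathfinish_smooth_closed_curve curve by blast+
    show "continuous_on (inside (path_image \<gamma>) \<union> path_image \<gamma>) (\<lambda>z. (z + F z) / 2)"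
      using smooth_on_set_continuous_on assms(3) D
      unfolding symplectomorphism_def diffeomorphism_onto_def by (auto intro!: continuous_intros)
    show "(z + F z) / 2 = z" if "z \<in> path_image \<gamma>" for z
      using that assms(5) by (auto simp: path_image_def)
    fix z0 assume "z0 \<in> inside (path_image \<gamma>) \<union> path_image \<gamma>"
    then obtain U V \<Phi> \<Psi> where U: "open U" "z0 \<in> U" and hom: "homeomorphism U V \<Phi> \<Psi>"
      and eq: "\<forall>z\<in>D \<inter> U. \<Phi> z = (z + F z) / 2"
      using midpoint_map_locally_invertible[OF curve D assms(3,4)] D by meson
    have "inj_on (\<lambda>z. (z + F z) / 2) (U \<inter> D)"
      by (rule inj_on_if_agrees_with_homeomorphism[OF hom eq])
    then show "\<exists>N. open N \<and> z0 \<in> N \<and>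
        inj_on (\<lambda>z. (z + F z) / 2) (N \<inter> (inside (path_image \<gamma>) \<union> path_image \<gamma>))"
      using U D by blast
  qed
  show ?thesis using homeomorphism_D D that by auto
qed

theorem lemma4:
  fixes D :: "complex set" and \<gamma> :: "real \<Rightarrow> complex" and F :: "complex \<Rightarrow> complex"
  assumes "connected D" and "simply_connected D" and "interior D \<noteq> {}"
    and "closed D" and "bounded D"
    and "smooth_closed_curve \<gamma>" and "frontier D = \<gamma> ` {0..1}"
    and "symplectomorphism D F" and "moderate D F"
    and "\<forall>t. F (\<gamma> t) = \<gamma> t"
  shows "diffeomorphism_onto ((\<lambda>z. (z, F z)) ` D) ((\<lambda>z. (z, z)) ` D)
           (\<lambda>(z1, z2). ((z1 + z2) / 2, (z1 + z2) / 2))"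
proof -
  have D: "D = inside (path_image \<gamma>) \<union> path_image \<gamma>"
    using closed_eq_inside_Un_Jordan[OF simple_path_smooth_closed_curve pathfinish_smooth_closed_curve]
      assms(3-7) by (simp add: path_image_def)
  obtain \<psi> where hom: "homeomorphism D D (\<lambda>z. (z + F z) / 2) \<psi>"
    using midpoint_map_homeomorphism[OF assms(6) D assms(8-10)] by blast
  from smooth_on_set_inverse[OF hom midpoint_map_locally_invertible[OF assms(6) D assms(8,9)]]
  show ?thesis
    using hom by (intro diffeomorphism_onto_graph_projection) (auto simp: homeomorphism_def)
qed

end
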